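(* Let $\mathcal{H}$ be a quasitriangular Hopf algebra with universal R-matrix $\mathcal{R}$, let $\mathcal{L}$ be a quasi-commutative left $\mathcal{H}$-module algebra ($(\mathcal{R}_2\triangleright\ell_2)(\mathcal{R}_1\triangleright\ell_1)=\ell_1\ell_2$ for all $\ell_1,\ell_2\in\mathcal{L}$), and suppose $\mathcal{R}\in\mathcal{H}\otimes\mathcal{K}$ for a Hopf subalgebra $\mathcal{K}\subset\mathcal{H}$. Then $\mathcal{L}$ is a $\mathcal{K}$-base algebra with respect to the restricted $\mathcal{K}$-action and the $\mathcal{K}$-coaction $\delta(\ell):=\mathcal{R}_2\otimes\mathcal{R}_1\triangleright\ell$.
   Context: $\mathcal{H}$ is a Hopf algebra over a commutative ring $k$ (over a field of characteristic zero), Sweedler notation $\Delta(x)=x^{(1)}\otimes x^{(2)}$; the universal R-matrix $\mathcal{R}=\mathcal{R}_1\otimes\mathcal{R}_2$ (summation implicit) satisfies $\mathcal{R}\Delta(h)=\Delta^{op}(h)\mathcal{R}$, $(\Delta\otimes\mathrm{id})(\mathcal{R})=\mathcal{R}_{13}\mathcal{R}_{23}$, $(\mathrm{id}\otimes\Delta)(\mathcal{R})=\mathcal{R}_{13}\mathcal{R}_{12}$. A $\mathcal{K}$-base algebra is a left $\mathcal{K}$-module algebra and left $\mathcal{K}$-comodule algebra $\mathcal{L}$ (action $\triangleright$, coaction $\delta(\ell)=\ell^{(1)}\otimes\ell^{[2]}$) satisfying $\{x^{(1)}\triangleright\ell\}^{(1)}x^{(2)}\otimes\{x^{(1)}\triangleright\ell\}^{[2]}=x^{(1)}\ell^{(1)}\otimes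 x^{(2)}\triangleright\ell^{[2]}$ for $x\in\mathcal{K}$, $\ell\in\mathcal{L}$, and $\ell_1\ell_2=(\ell_1^{(1)}\triangleright\ell_2)\ell_1^{[2]}$ for $\ell_1,\ell_2\in\mathcal{L}$. *)

theory Defs
  imports Complex_Main
begin

text \<open>
Elements of a tensor product V \<otimes> W (resp. U \<otimes> V \<otimes> W) are
represented by finite lists of elementary tensors (Sweedler sums).
Two such lists denote the same tensor iff they agree under all products
of linear functionals (this is tensor equality, since over a field
V \<otimes> W embeds into the dual of V* \<otimes> W*).
\<close>

definition kalgebra :: "('k::field \<Rightarrow> 'a::ring_1 \<Rightarrow> 'a) \<Rightarrow> bool" where
  "kalgebra s \<longleftrightarrow> vector_space s \<and>
     (\<forall>c x y. s c (x * y) = s c x * y \<and> s c (x * y) = x * s c y)"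

definition lin_fun :: "('k::field \<Rightarrow> 'a::ab_group_add \<Rightarrow> 'a) \<Rightarrow> ('a \<Rightarrow> 'k) \<Rightarrow> bool" where
  "lin_fun s f \<longleftrightarrow> Vector_Spaces.linear s (*) f"

definition teq2 :: "('k::field \<Rightarrow> 'a::ab_group_add \<Rightarrow> 'a) \<Rightarrow> ('k \<Rightarrow> 'b::ab_group_add \<Rightarrow> 'b)
     \<Rightarrow> ('a \<times> 'b) list \<Rightarrow> ('a \<times> 'b) list \<Rightarrow> bool" where
  "teq2 sA sB xs ys \<longleftrightarrow> (\<forall>\<phi> \<psi>. lin_fun sA \<phi> \<longrightarrow> lin_fun sB \<psi> \<longrightarrow>
      (\<Sum>(a,b)\<leftarrow>xs. \<phi> a * \<psi> b) = (\<Sum>(a,b)\<leftarrow>ys. \<phi> a * \<psi> b))"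

definition teq3 :: "('k::field \<Rightarrow> 'a::ab_group_add \<Rightarrow> 'a) \<Rightarrow> ('k \<Rightarrow> 'b::ab_group_add \<Rightarrow> 'b)
     \<Rightarrow> ('k \<Rightarrow> 'c::ab_group_add \<Rightarrow> 'c)
     \<Rightarrow> ('a \<times> 'b \<times> 'c) list \<Rightarrow> ('a \<times> 'b \<times> 'c) list \<Rightarrow> bool" where
  "teq3 sA sB sC xs ys \<longleftrightarrow> (\<forall>\<phi> \<psi> \<chi>. lin_fun sA \<phi> \<longrightarrow> lin_fun sB \<psi> \<longrightarrow> lin_fun sC \<chi> \<longrightarrow>
      (\<Sum>(a,b,c)\<leftarrow>xs. \<phi> a * \<psi> b * \<chi> c) = (\<Sum>(a,b,c)\<leftarrow>ys. \<phi> a * \<psi> b * \<chi> c))"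

definition hopf_algebra :: "('k::field \<Rightarrow> 'h::ring_1 \<Rightarrow> 'h) \<Rightarrow> ('h \<Rightarrow> ('h \<times> 'h) list)
     \<Rightarrow> ('h \<Rightarrow> 'k) \<Rightarrow> ('h \<Rightarrow> 'h) \<Rightarrow> bool" where
  "hopf_algebra sH \<Delta> \<epsilon> S \<longleftrightarrow> kalgebra sH \<and>
     \<comment> \<open>\<Delta> linear\<close>
     (\<forall>x y. teq2 sH sH (\<Delta> (x + y)) (\<Delta> x @ \<Delta> y)) \<and>
     (\<forall>c x. teq2 sH sH (\<Delta> (sH c x)) (map (\<lambda>(a,b). (sH c a, b)) (\<Delta> x))) \<and>
     \<comment> \<open>coassociativity\<close>
     (\<forall>x. teq3 sH sH sH [(a1, a2, b). (a,b) \<leftarrow> \<Delta> x, (a1,a2) \<leftarrow> \<Delta> a]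
                         [(a, b1, b2). (a,b) \<leftarrow> \<Delta> x, (b1,b2) \<leftarrow> \<Delta> b]) \<and>
     \<comment> \<open>counit\<close>
     lin_fun sH \<epsilon> \<and>
     (\<forall>x. (\<Sum>(a,b)\<leftarrow>\<Delta> x. sH (\<epsilon> a) b) = x) \<and>
     (\<forall>x. (\<Sum>(a,b)\<leftarrow>\<Delta> x. sH (\<epsilon> b) a) = x) \<and>
     \<comment> \<open>\<Delta> and \<epsilon> are algebra maps\<close>
     (\<forall>x y. teq2 sH sH (\<Delta> (x * y)) [(a * c, b * d). (a,b) \<leftarrow> \<Delta> x, (c,d) \<leftarrow> \<Delta> y]) \<and>
     teq2 sH sH (\<Delta> 1) [(1, 1)] \<and>
     (\<forall>x y. \<epsilon> (x * y) = \<epsilon> x * \<epsilon> y) \<and> \<epsilon> 1 = 1 \<and>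
     \<comment> \<open>antipode\<close>
     Vector_Spaces.linear sH sH S \<and>
     (\<forall>x. (\<Sum>(a,b)\<leftarrow>\<Delta> x. S a * b) = sH (\<epsilon> x) 1) \<and>
     (\<forall>x. (\<Sum>(a,b)\<leftarrow>\<Delta> x. a * S b) = sH (\<epsilon> x) 1)"

definition tmul2 :: "('h::times \<times> 'h) list \<Rightarrow> ('h \<times> 'h) list \<Rightarrow> ('h \<times> 'h) list" where
  "tmul2 xs ys = [(a * c, b * d). (a,b) \<leftarrow> xs, (c,d) \<leftarrow> ys]"

definition quasitriangular :: "('k::field \<Rightarrow> 'h::ring_1 \<Rightarrow> 'h) \<Rightarrow> ('h \<Rightarrow> ('h \<times> 'h) list)
     \<Rightarrow> ('h \<Rightarrow> 'k) \<Rightarrow> ('h \<Rightarrow> 'h) \<Rightarrow> ('h \<times> 'h) list \<Rightarrow> bool" where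
  "quasitriangular sH \<Delta> \<epsilon> S R \<longleftrightarrow> hopf_algebra sH \<Delta> \<epsilon> S \<and>
     (\<exists>Ri. teq2 sH sH (tmul2 R Ri) [(1,1)] \<and> teq2 sH sH (tmul2 Ri R) [(1,1)]) \<and>
     (\<forall>x. teq2 sH sH (tmul2 R (\<Delta> x)) (tmul2 (map (\<lambda>(a,b). (b,a)) (\<Delta> x)) R)) \<and>
     teq3 sH sH sH [(a1, a2, r2). (r1,r2) \<leftarrow> R, (a1,a2) \<leftarrow> \<Delta> r1]
                   [(r1, s1, r2 * s2). (r1,r2) \<leftarrow> R, (s1,s2) \<leftarrow> R] \<and>
     teq3 sH sH sH [(r1, a1, a2). (r1,r2) \<leftarrow> R, (a1,a2) \<leftarrow> \<Delta> r2]
                   [(r1 * s1, s2, r2). (r1,r2) \<leftarrow> R, (s1,s2) \<leftarrow> R]"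

definition hopf_subalgebra :: "('k::field \<Rightarrow> 'h::ring_1 \<Rightarrow> 'h) \<Rightarrow> ('h \<Rightarrow> ('h \<times> 'h) list)
     \<Rightarrow> ('h \<Rightarrow> 'h) \<Rightarrow> 'h set \<Rightarrow> bool" where
  "hopf_subalgebra sH \<Delta> S K \<longleftrightarrow>
     0 \<in> K \<and> 1 \<in> K \<and> (\<forall>x\<in>K. \<forall>y\<in>K. x + y \<in> K \<and> x * y \<in> K) \<and>
     (\<forall>c. \<forall>x\<in>K. sH c x \<in> K) \<and>
     (\<forall>x\<in>K. \<exists>ys. teq2 sH sH (\<Delta> x) ys \<and> set ys \<subseteq> K \<times> K) \<and>
     (\<forall>x\<in>K. S x \<in> K)"

definition module_algebra :: "('k::field \<Rightarrow> 'h::ring_1 \<Rightarrow> 'h) \<Rightarrow> ('k \<Rightarrow> 'l::ring_1 \<Rightarrow> 'l)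
     \<Rightarrow> ('h \<Rightarrow> ('h \<times> 'h) list) \<Rightarrow> ('h \<Rightarrow> 'k) \<Rightarrow> 'h set \<Rightarrow> ('h \<Rightarrow> 'l \<Rightarrow> 'l) \<Rightarrow> bool" where
  "module_algebra sH sL \<Delta> \<epsilon> K act \<longleftrightarrow> kalgebra sL \<and>
     (\<forall>x\<in>K. \<forall>y\<in>K. \<forall>l. act (x + y) l = act x l + act y l) \<and>
     (\<forall>c. \<forall>x\<in>K. \<forall>l. act (sH c x) l = sL c (act x l)) \<and>
     (\<forall>x\<in>K. \<forall>l m. act x (l + m) = act x l + act x m) \<and>
     (\<forall>x\<in>K. \<forall>c l. act x (sL c l) = sL c (act x l)) \<and>
     (\<forall>x\<in>K. \<forall>y\<in>K. \<forall>l. act (x * y) l = act x (act y l)) \<and>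
     (\<forall>l. act 1 l = l) \<and>
     (\<forall>x\<in>K. \<forall>l m. act x (l * m) = (\<Sum>(a,b)\<leftarrow>\<Delta> x. act a l * act b m)) \<and>
     (\<forall>x\<in>K. act x 1 = sL (\<epsilon> x) 1)"

definition comodule_algebra :: "('k::field \<Rightarrow> 'h::ring_1 \<Rightarrow> 'h) \<Rightarrow> ('k \<Rightarrow> 'l::ring_1 \<Rightarrow> 'l)
     \<Rightarrow> ('h \<Rightarrow> ('h \<times> 'h) list) \<Rightarrow> ('h \<Rightarrow> 'k) \<Rightarrow> 'h set \<Rightarrow> ('l \<Rightarrow> ('h \<times> 'l) list) \<Rightarrow> bool" where
  "comodule_algebra sH sL \<Delta> \<epsilon> K \<delta> \<longleftrightarrow> kalgebra sL \<and>
     (\<forall>l. set (map fst (\<delta> l)) \<subseteq> K) \<and>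
     (\<forall>l m. teq2 sH sL (\<delta> (l + m)) (\<delta> l @ \<delta> m)) \<and>
     (\<forall>c l. teq2 sH sL (\<delta> (sL c l)) (map (\<lambda>(a,n). (a, sL c n)) (\<delta> l))) \<and>
     (\<forall>l. teq3 sH sH sL [(a1, a2, n). (a,n) \<leftarrow> \<delta> l, (a1,a2) \<leftarrow> \<Delta> a]
                         [(a, b, p). (a,n) \<leftarrow> \<delta> l, (b,p) \<leftarrow> \<delta> n]) \<and>
     (\<forall>l. (\<Sum>(a,n)\<leftarrow>\<delta> l. sL (\<epsilon> a) n) = l) \<and>
     (\<forall>l m. teq2 sH sL (\<delta> (l * m)) [(a * b, n * p). (a,n) \<leftarrow> \<delta> l, (b,p) \<leftarrow> \<delta> m]) \<and>
     teq2 sH sL (\<delta> 1) [(1, 1)]"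

definition base_algebra :: "('k::field \<Rightarrow> 'h::ring_1 \<Rightarrow> 'h) \<Rightarrow> ('k \<Rightarrow> 'l::ring_1 \<Rightarrow> 'l)
     \<Rightarrow> ('h \<Rightarrow> ('h \<times> 'h) list) \<Rightarrow> ('h \<Rightarrow> 'k) \<Rightarrow> 'h set
     \<Rightarrow> ('h \<Rightarrow> 'l \<Rightarrow> 'l) \<Rightarrow> ('l \<Rightarrow> ('h \<times> 'l) list) \<Rightarrow> bool" where
  "base_algebra sH sL \<Delta> \<epsilon> K act \<delta> \<longleftrightarrow>
     module_algebra sH sL \<Delta> \<epsilon> K act \<and> comodule_algebra sH sL \<Delta> \<epsilon> K \<delta> \<and>
     (\<forall>x\<in>K. \<forall>l. teq2 sH sL [(c * b, n). (a,b) \<leftarrow> \<Delta> x, (c,n) \<leftarrow> \<delta> (act a l)]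
                            [(a * c, act b n). (a,b) \<leftarrow> \<Delta> x, (c,n) \<leftarrow> \<delta> l]) \<and>
     (\<forall>l1 l2. l1 * l2 = (\<Sum>(a,n)\<leftarrow>\<delta> l1. act a l2 * n))"

definition quasi_commutative :: "('h \<times> 'h) list \<Rightarrow> ('h \<Rightarrow> 'l::ring_1 \<Rightarrow> 'l) \<Rightarrow> bool" where
  "quasi_commutative R act \<longleftrightarrow>
     (\<forall>l1 l2. (\<Sum>(r1,r2)\<leftarrow>R. act r2 l2 * act r1 l1) = l1 * l2)"

end

theory Submission
  imports Defs
begin

text \<open>
Every axiom of a base algebra is an
axiom of the R-matrix acted on L: coassociativity of \<delta> comes from (id \<otimes> \<Delta>)(R) = R13 R12,
multiplicativity from (\<Delta> \<otimes> id)(R) = R13 R23 together with \<triangleright> being a module algebra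
action, compatibility with the action from R \<Delta>(x) = \<Delta>op(x) R, and \<delta>(1) = 1 \<otimes> 1 from
(\<epsilon> \<otimes> id)(R) = 1, which follows from (\<Delta> \<otimes> id)(R) = R13 R23 and the invertibility of R.
Quasi-commutativity is literally the identity l1 l2 = (l1(1) \<triangleright> l2) l1[2], and for l2 = 1 it
is the counit law of \<delta>.

Tensor identities are tested against products of linear functionals. For multiplicativity
the test function \<psi>((x \<triangleright> l)(y \<triangleright> m)) is only bilinear, which needs the universal property
of the tensor product: expanding the first legs of a Sweedler sum in a dual basis shows that
equal sums agree under every bilinear form.
\<close>

lemma vector_space_field_mult: "vector_space ((*) :: 'k::field \<Rightarrow> 'k \<Rightarrow> 'k)"
  by unfold_locales (simp_all add: algebra_simps)

lemma lin_fun_module_hom: "lin_fun s f \<Longrightarrow> module_hom s (*) f"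
  unfolding lin_fun_def module_hom_iff_linear .

lemmas lin_fun_zero = module_hom.zero[OF lin_fun_module_hom]
  and lin_fun_add = module_hom.add[OF lin_fun_module_hom]
  and lin_fun_diff = module_hom.diff[OF lin_fun_module_hom]
  and lin_fun_scale = module_hom.scale[OF lin_fun_module_hom]
  and lin_fun_sum = module_hom.sum[OF lin_fun_module_hom]

lemma lin_fun_sum_list: "lin_fun s f \<Longrightarrow> f (\<Sum>x\<leftarrow>xs. g x) = (\<Sum>x\<leftarrow>xs. f (g x))"
  by (induction xs) (simp_all add: lin_fun_zero lin_fun_add)

lemma lin_fun_iff:
  assumes "vector_space s"
  shows "lin_fun s f \<longleftrightarrow> (\<forall>x y. f (x + y) = f x + f y) \<and> (\<forall>c x. f (s c x) = c * f x)"
  using assms vector_space_field_mult unfolding lin_fun_def Vector_Spaces.linear_iff by blast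

lemma lin_fun_separates_points:
  assumes vs: "vector_space s" and eq: "\<And>\<psi>. lin_fun s \<psi> \<Longrightarrow> \<psi> u = \<psi> v"
  shows "u = v"
proof (rule ccontr)
  assume "u \<noteq> v"
  interpret vector_space s by fact
  interpret vp: vector_space_pair s "(*)"
    using vs vector_space_field_mult by (simp add: vector_space_pair_def)
  have ind: "independent {u - v}"
    using \<open>u \<noteq> v\<close> by simp
  define \<psi> where "\<psi> = vp.construct {u - v} (\<lambda>_. 1)"
  have lin: "lin_fun s \<psi>"
    unfolding lin_fun_def \<psi>_def by (rule vp.linear_construct[OF ind])
  have "\<psi> (u - v) = 1"
    unfolding \<psi>_def by (simp add: vp.construct_basis[OF ind])
  then show False
    using eq[OF lin] by (simp add: lin_fun_diff[OF lin])
qed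

lemma finite_dual_expansion:
  assumes vs: "vector_space s" and "finite A"
  obtains E and \<phi> :: "'a \<Rightarrow> 'a::ab_group_add \<Rightarrow> 'k::field"
  where "finite E" and "\<And>e. lin_fun s (\<phi> e)" and "\<And>a. a \<in> A \<Longrightarrow> a = (\<Sum>e\<in>E. s (\<phi> e a) e)"
proof -
  interpret vector_space s by fact
  interpret vp: vector_space_pair s "(*)"
    using vs vector_space_field_mult by (simp add: vector_space_pair_def)
  obtain B where B: "B \<subseteq> A" "independent B" "A \<subseteq> span B"
    by (rule maximal_independent_subset)
  have fin: "finite B"
    using B(1) \<open>finite A\<close> by (rule finite_subset)
  define \<phi> where "\<phi> e = vp.construct B (\<lambda>b. if b = e then 1 else 0)" for e
  have lin: "lin_fun s (\<phi> e)" for e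
    unfolding lin_fun_def \<phi>_def by (rule vp.linear_construct[OF B(2)])
  have "a = (\<Sum>e\<in>B. s (\<phi> e a) e)" if "a \<in> A" for a
  proof -
    have a: "a = (\<Sum>b\<in>B. s (representation B a b) b)"
      using sum_representation_eq[OF B(2) _ fin order.refl] B(3) that by auto
    have "\<phi> e a = representation B a e" if "e \<in> B" for e
    proof -
      have "\<phi> e a = (\<Sum>b\<in>B. representation B a b * \<phi> e b)"
        using arg_cong[OF a, of "\<phi> e"] by (simp add: lin_fun_sum[OF lin] lin_fun_scale[OF lin])
      also have "\<dots> = representation B a e"
        using that fin by (simp add: \<phi>_def vp.construct_basis[OF B(2)] if_distrib cong: if_cong)
      finally show ?thesis .
    qed
    then show ?thesis
      using a by simp
  qed
  with fin lin show thesis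
    by (rule that)
qed

lemma sum_list_sum_swap: "(\<Sum>x\<leftarrow>xs. \<Sum>e\<in>E. f x e) = (\<Sum>e\<in>E. \<Sum>x\<leftarrow>xs. f x e)"
  by (induction xs) (simp_all add: sum.distrib)

lemma sum_list_concat_map: "(\<Sum>x\<leftarrow>concat (map g xs). f x) = (\<Sum>y\<leftarrow>xs. \<Sum>x\<leftarrow>g y. f x)"
  by (induction xs) simp_all

lemma sum_list_swap:
  "(\<Sum>x\<leftarrow>xs. \<Sum>y\<leftarrow>ys. f x y) = (\<Sum>y\<leftarrow>ys. \<Sum>x\<leftarrow>xs. (f x y :: 'a::comm_monoid_add))"
  by (induction xs) (auto simp: sum_list_addf)

definition bilinear_form :: "('k::field \<Rightarrow> 'a::ab_group_add \<Rightarrow> 'a) \<Rightarrow> ('k \<Rightarrow> 'b::ab_group_add \<Rightarrow> 'b)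
    \<Rightarrow> ('a \<Rightarrow> 'b \<Rightarrow> 'k) \<Rightarrow> bool" where
  "bilinear_form sA sB F \<longleftrightarrow> (\<forall>b. lin_fun sA (\<lambda>a. F a b)) \<and> (\<forall>a. lin_fun sB (F a))"

lemma bilinear_form_mult:
  assumes "lin_fun sA \<phi>" and "lin_fun sB \<psi>"
  shows "bilinear_form sA sB (\<lambda>a b. \<phi> a * \<psi> b)"
  using assms lin_fun_module_hom[OF assms(1)] lin_fun_module_hom[OF assms(2)]
  unfolding bilinear_form_def lin_fun_def
  by (auto simp: Vector_Spaces.linear_iff distrib_left distrib_right mult.left_commute)

lemma teq2_bilinear_form:
  assumes vA: "vector_space sA" and vB: "vector_space sB"
    and F: "bilinear_form sA sB F" and eq: "teq2 sA sB xs ys"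
  shows "(\<Sum>(a,b)\<leftarrow>xs. F a b) = (\<Sum>(a,b)\<leftarrow>ys. F a b)"
proof -
  obtain E and \<phi> where "finite E" and lin: "\<And>e. lin_fun sA (\<phi> e)"
    and expand: "\<And>a. a \<in> fst ` set (xs @ ys) \<Longrightarrow> a = (\<Sum>e\<in>E. sA (\<phi> e a) e)"
    using finite_dual_expansion[OF vA, of "fst ` set (xs @ ys)"] by blast
  have F1: "\<And>b. lin_fun sA (\<lambda>a. F a b)" and F2: "\<And>a. lin_fun sB (F a)"
    using F unfolding bilinear_form_def by blast+
  define w where "w zs e = (\<Sum>(a,b)\<leftarrow>zs. sB (\<phi> e a) b)" for zs e
  have F_sum: "(\<Sum>(a,b)\<leftarrow>zs. F a b) = (\<Sum>e\<in>E. F e (w zs e))" if "set zs \<subseteq> set (xs @ ys)" for zs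
  proof -
    have "F a b = (\<Sum>e\<in>E. F e (sB (\<phi> e a) b))" if "(a, b) \<in> set zs" for a b
    proof -
      have "F a b = F (\<Sum>e\<in>E. sA (\<phi> e a) e) b"
        using expand[of a] that \<open>set zs \<subseteq> _\<close> by force
      also have "\<dots> = (\<Sum>e\<in>E. \<phi> e a * F e b)"
        by (simp add: lin_fun_sum[OF F1] lin_fun_scale[OF F1])
      also have "\<dots> = (\<Sum>e\<in>E. F e (sB (\<phi> e a) b))"
        by (simp add: lin_fun_scale[OF F2])
      finally show ?thesis .
    qed
    then have "(\<Sum>(a,b)\<leftarrow>zs. F a b) = (\<Sum>(a,b)\<leftarrow>zs. \<Sum>e\<in>E. F e (sB (\<phi> e a) b))"
      by (intro arg_cong[where f = sum_list] map_cong) auto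
    also have "\<dots> = (\<Sum>e\<in>E. \<Sum>(a,b)\<leftarrow>zs. F e (sB (\<phi> e a) b))"
      using sum_list_sum_swap[of "\<lambda>(a,b) e. F e (sB (\<phi> e a) b)" E zs] by (simp add: split_def)
    also have "\<dots> = (\<Sum>e\<in>E. F e (w zs e))"
      by (simp add: w_def lin_fun_sum_list[OF F2] split_def)
    finally show ?thesis .
  qed
  have "w xs e = w ys e" for e
  proof (rule lin_fun_separates_points[OF vB])
    fix \<psi> assume \<psi>: "lin_fun sB \<psi>"
    have "(\<Sum>(a,b)\<leftarrow>xs. \<phi> e a * \<psi> b) = (\<Sum>(a,b)\<leftarrow>ys. \<phi> e a * \<psi> b)"
      using eq lin \<psi> unfolding teq2_def by blast
    then show "\<psi> (w xs e) = \<psi> (w ys e)"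
      by (simp add: w_def lin_fun_sum_list[OF \<psi>] lin_fun_scale[OF \<psi>] split_def)
  qed
  then show ?thesis
    using F_sum[of xs] F_sum[of ys] by simp
qed

lemma teq3_bilinear_form:
  assumes vA: "vector_space sA" and vB: "vector_space sB"
    and F: "bilinear_form sA sB F" and \<chi>: "lin_fun sC \<chi>" and eq: "teq3 sA sB sC xs ys"
  shows "(\<Sum>(a,b,c)\<leftarrow>xs. F a b * \<chi> c) = (\<Sum>(a,b,c)\<leftarrow>ys. F a b * \<chi> c)"
proof -
  let ?contract = "map (\<lambda>(a,b,c). (a, sB (\<chi> c) b))"
  have "teq2 sA sB (?contract xs) (?contract ys)"
    unfolding teq2_def
  proof (intro allI impI)
    fix \<phi> \<psi> assume \<phi>: "lin_fun sA \<phi>" and \<psi>: "lin_fun sB \<psi>"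
    have "(\<Sum>(a,b,c)\<leftarrow>xs. \<phi> a * \<psi> b * \<chi> c) = (\<Sum>(a,b,c)\<leftarrow>ys. \<phi> a * \<psi> b * \<chi> c)"
      using eq \<phi> \<psi> \<chi> unfolding teq3_def by blast
    then show "(\<Sum>(a,b)\<leftarrow>?contract xs. \<phi> a * \<psi> b) = (\<Sum>(a,b)\<leftarrow>?contract ys. \<phi> a * \<psi> b)"
      by (simp add: o_def split_def lin_fun_scale[OF \<psi>] mult_ac)
  qed
  from teq2_bilinear_form[OF vA vB F this] show ?thesis
    using F unfolding bilinear_form_def by (simp add: o_def split_def lin_fun_scale mult_ac)
qed

lemma module_algebra_restrict:
  "module_algebra sH sL \<Delta> \<epsilon> UNIV act \<Longrightarrow> module_algebra sH sL \<Delta> \<epsilon> K act"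
  unfolding module_algebra_def by blast

definition R_coaction :: "('h \<times> 'h) list \<Rightarrow> ('h \<Rightarrow> 'l \<Rightarrow> 'l) \<Rightarrow> 'l \<Rightarrow> ('h \<times> 'l) list" where
  "R_coaction R act l = [(r2, act r1 l). (r1, r2) \<leftarrow> R]"

lemma quasi_commutative_R_coaction:
  "quasi_commutative R act \<Longrightarrow> l1 * l2 = (\<Sum>(a,n)\<leftarrow>R_coaction R act l1. act a l2 * n)"
  unfolding quasi_commutative_def R_coaction_def by (simp add: o_def split_def)

locale quasitriangular_module_algebra =
  fixes sH :: "'k::field \<Rightarrow> 'h::ring_1 \<Rightarrow> 'h" and sL :: "'k \<Rightarrow> 'l::ring_1 \<Rightarrow> 'l"
    and \<Delta> :: "'h \<Rightarrow> ('h \<times> 'h) list" and \<epsilon> :: "'h \<Rightarrow> 'k" and S :: "'h \<Rightarrow> 'h"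
    and R :: "('h \<times> 'h) list" and act :: "'h \<Rightarrow> 'l \<Rightarrow> 'l"
  assumes quasitriangular: "quasitriangular sH \<Delta> \<epsilon> S R"
    and module_algebra: "module_algebra sH sL \<Delta> \<epsilon> UNIV act"
begin

lemma hopf_algebra: "hopf_algebra sH \<Delta> \<epsilon> S"
  using quasitriangular unfolding quasitriangular_def by blast

lemma vector_space_H: "vector_space sH"
  and scale_mult_H: "sH c (x * y) = sH c x * y" "sH c (x * y) = x * sH c y"
  using hopf_algebra unfolding hopf_algebra_def kalgebra_def by blast+

lemma lin_fun_counit: "lin_fun sH \<epsilon>"
  and counit_one: "\<epsilon> 1 = 1"
  and counit_left: "(\<Sum>(a,b)\<leftarrow>\<Delta> x. sH (\<epsilon> a) b) = x"
  using hopf_algebra unfolding hopf_algebra_def by blast+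

lemma kalgebra_L: "kalgebra sL"
  using module_algebra unfolding module_algebra_def by blast

lemma scale_mult_L: "sL c (l * m) = sL c l * m" "sL c (l * m) = l * sL c m"
  using kalgebra_L unfolding kalgebra_def by blast+

lemma act_add_left: "act (x + y) l = act x l + act y l"
  and act_scale_left: "act (sH c x) l = sL c (act x l)"
  and act_add: "act x (l + m) = act x l + act x m"
  and act_scale: "act x (sL c l) = sL c (act x l)"
  and act_mult: "act (x * y) l = act x (act y l)"
  and act_prod: "act x (l * m) = (\<Sum>(a,b)\<leftarrow>\<Delta> x. act a l * act b m)"
  and act_unit: "act x 1 = sL (\<epsilon> x) 1"
  using module_algebra unfolding module_algebra_def by blast+

lemma lin_fun_act: "lin_fun sL \<psi> \<Longrightarrow> lin_fun sH (\<lambda>x. \<psi> (act x l))"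
  using vector_space_H
  by (simp add: lin_fun_iff act_add_left act_scale_left lin_fun_add lin_fun_scale)

lemma lin_fun_mult_right: "lin_fun sH \<phi> \<Longrightarrow> lin_fun sH (\<lambda>x. \<phi> (x * c))"
  using vector_space_H
  by (simp add: lin_fun_iff distrib_right scale_mult_H(1)[symmetric] lin_fun_add lin_fun_scale)

lemma lin_fun_mult_left: "lin_fun sH \<phi> \<Longrightarrow> lin_fun sH (\<lambda>x. \<phi> (c * x))"
  using vector_space_H
  by (simp add: lin_fun_iff distrib_left scale_mult_H(2)[symmetric] lin_fun_add lin_fun_scale)

lemma R_Delta_left:
  assumes "bilinear_form sH sH F" and "lin_fun sH \<chi>"
  shows "(\<Sum>(r1,r2)\<leftarrow>R. \<Sum>(a1,a2)\<leftarrow>\<Delta> r1. F a1 a2 * \<chi> r2) =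
         (\<Sum>(r1,r2)\<leftarrow>R. \<Sum>(s1,s2)\<leftarrow>R. F r1 s1 * \<chi> (r2 * s2))"
proof -
  have "teq3 sH sH sH [(a1, a2, r2). (r1,r2) \<leftarrow> R, (a1,a2) \<leftarrow> \<Delta> r1]
                      [(r1, s1, r2 * s2). (r1,r2) \<leftarrow> R, (s1,s2) \<leftarrow> R]"
    using quasitriangular unfolding quasitriangular_def by blast
  from teq3_bilinear_form[OF vector_space_H vector_space_H assms this] show ?thesis
    by (simp add: sum_list_concat_map o_def split_def)
qed

lemma R_Delta_right:
  assumes "lin_fun sH \<phi>" "lin_fun sH \<psi>" "lin_fun sH \<chi>"
  shows "(\<Sum>(r1,r2)\<leftarrow>R. \<Sum>(a1,a2)\<leftarrow>\<Delta> r2. \<phi> r1 * \<psi> a1 * \<chi> a2) =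
         (\<Sum>(r1,r2)\<leftarrow>R. \<Sum>(s1,s2)\<leftarrow>R. \<phi> (r1 * s1) * \<psi> s2 * \<chi> r2)"
  using quasitriangular assms unfolding quasitriangular_def teq3_def
  by (simp add: sum_list_concat_map o_def split_def)

lemma R_Delta_commute:
  assumes "lin_fun sH \<phi>" "lin_fun sH \<psi>"
  shows "(\<Sum>(r1,r2)\<leftarrow>R. \<Sum>(a,b)\<leftarrow>\<Delta> x. \<phi> (r1 * a) * \<psi> (r2 * b)) =
         (\<Sum>(a,b)\<leftarrow>\<Delta> x. \<Sum>(r1,r2)\<leftarrow>R. \<phi> (b * r1) * \<psi> (a * r2))"
  using quasitriangular assms unfolding quasitriangular_def teq2_def tmul2_def
  by (simp add: sum_list_concat_map o_def split_def)

lemma R_right_inverse: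
  obtains Ri where "\<And>\<phi> \<psi>. lin_fun sH \<phi> \<Longrightarrow> lin_fun sH \<psi> \<Longrightarrow>
    (\<Sum>(r1,r2)\<leftarrow>R. \<Sum>(s1,s2)\<leftarrow>Ri. \<phi> (r1 * s1) * \<psi> (r2 * s2)) = \<phi> 1 * \<psi> 1"
proof -
  obtain Ri where "teq2 sH sH (tmul2 R Ri) [(1, 1)]"
    using quasitriangular unfolding quasitriangular_def by blast
  then show thesis
    by (intro that[of Ri]) (simp_all add: teq2_def tmul2_def sum_list_concat_map o_def split_def)
qed

text \<open>Applying \<epsilon> \<otimes> id \<otimes> id to (\<Delta> \<otimes> id)(R) = R13 R23 gives R = (1 \<otimes> u) R for
  u = (\<epsilon> \<otimes> id)(R); multiplying by R\<inverse> on the right then yields u = 1.\<close>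

lemma R_absorbs_counit_leg:
  assumes \<phi>: "lin_fun sH \<phi>" and \<psi>: "lin_fun sH \<psi>"
  shows "(\<Sum>(r1,r2)\<leftarrow>R. \<phi> r1 * \<psi> r2) =
         (\<Sum>(r1,r2)\<leftarrow>R. \<phi> r1 * \<psi> ((\<Sum>(s1,s2)\<leftarrow>R. sH (\<epsilon> s1) s2) * r2))"
proof -
  have \<phi>_counit: "(\<Sum>(a1,a2)\<leftarrow>\<Delta> x. \<epsilon> a1 * \<phi> a2 * c) = \<phi> x * c" for x c
    using arg_cong[OF counit_left[of x], of \<phi>]
    by (simp add: lin_fun_sum_list[OF \<phi>] lin_fun_scale[OF \<phi>] sum_list_mult_const split_def)
  have \<psi>_leg: "\<psi> ((\<Sum>(s1,s2)\<leftarrow>R. sH (\<epsilon> s1) s2) * x) = (\<Sum>(s1,s2)\<leftarrow>R. \<epsilon> s1 * \<psi> (s2 * x))" for x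
    by (simp add: sum_list_mult_const[symmetric] scale_mult_H(1)[symmetric] split_def
        lin_fun_sum_list[OF \<psi>] lin_fun_scale[OF \<psi>])
  have "(\<Sum>(r1,r2)\<leftarrow>R. \<phi> r1 * \<psi> r2) = (\<Sum>(r1,r2)\<leftarrow>R. \<Sum>(a1,a2)\<leftarrow>\<Delta> r1. \<epsilon> a1 * \<phi> a2 * \<psi> r2)"
    by (simp only: \<phi>_counit)
  also have "\<dots> = (\<Sum>(r1,r2)\<leftarrow>R. \<Sum>(s1,s2)\<leftarrow>R. \<epsilon> r1 * \<phi> s1 * \<psi> (r2 * s2))"
    by (rule R_Delta_left[OF bilinear_form_mult[OF lin_fun_counit \<phi>] \<psi>])
  also have "\<dots> = (\<Sum>(s1,s2)\<leftarrow>R. \<phi> s1 * \<psi> ((\<Sum>(r1,r2)\<leftarrow>R. sH (\<epsilon> r1) r2) * s2))"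
    unfolding split_def
    by (subst sum_list_swap) (simp add: \<psi>_leg[unfolded split_def] sum_list_const_mult[symmetric] mult_ac)
  finally show ?thesis .
qed

lemma R_counit_left: "(\<Sum>(r1,r2)\<leftarrow>R. sH (\<epsilon> r1) r2) = 1"
proof -
  define u where "u = (\<Sum>(r1,r2)\<leftarrow>R. sH (\<epsilon> r1) r2)"
  obtain Ri where Ri: "\<And>\<phi> \<psi>. lin_fun sH \<phi> \<Longrightarrow> lin_fun sH \<psi> \<Longrightarrow>
      (\<Sum>(r1,r2)\<leftarrow>R. \<Sum>(s1,s2)\<leftarrow>Ri. \<phi> (r1 * s1) * \<psi> (r2 * s2)) = \<phi> 1 * \<psi> 1"
    using R_right_inverse by blast
  have "\<phi> 1 = \<phi> u" if \<phi>: "lin_fun sH \<phi>" for \<phi>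
  proof -
    have "\<phi> 1 = (\<Sum>(s1,s2)\<leftarrow>Ri. \<Sum>(r1,r2)\<leftarrow>R. \<epsilon> (r1 * s1) * \<phi> (r2 * s2))"
      using Ri[OF lin_fun_counit \<phi>] by (simp add: counit_one split_def sum_list_swap[of _ Ri R])
    also have "\<dots> = (\<Sum>(s1,s2)\<leftarrow>Ri. \<Sum>(r1,r2)\<leftarrow>R. \<epsilon> (r1 * s1) * \<phi> (u * (r2 * s2)))"
      using R_absorbs_counit_leg[OF lin_fun_mult_right[OF lin_fun_counit] lin_fun_mult_right[OF \<phi>]]
      by (simp add: u_def mult.assoc)
    also have "\<dots> = \<phi> u"
      using Ri[OF lin_fun_counit lin_fun_mult_left[OF \<phi>]]
      by (simp add: counit_one split_def sum_list_swap[of _ Ri R])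
    finally show ?thesis .
  qed
  then show ?thesis
    unfolding u_def using lin_fun_separates_points[OF vector_space_H] by metis
qed

lemma R_coaction_add: "teq2 sH sL (R_coaction R act (l + m)) (R_coaction R act l @ R_coaction R act m)"
  unfolding teq2_def R_coaction_def
  by (auto simp: act_add lin_fun_add distrib_left sum_list_addf o_def split_def)

lemma R_coaction_scale:
  "teq2 sH sL (R_coaction R act (sL c l)) (map (\<lambda>(a,n). (a, sL c n)) (R_coaction R act l))"
  unfolding teq2_def R_coaction_def by (auto simp: act_scale o_def split_def)

lemma R_coaction_coassoc:
  "teq3 sH sH sL [(a1, a2, n). (a,n) \<leftarrow> R_coaction R act l, (a1,a2) \<leftarrow> \<Delta> a]
                 [(a, b, p). (a,n) \<leftarrow> R_coaction R act l, (b,p) \<leftarrow> R_coaction R act n]"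
  unfolding teq3_def
proof (intro allI impI)
  fix \<phi> \<psi> \<chi> assume \<phi>: "lin_fun sH \<phi>" and \<psi>: "lin_fun sH \<psi>" and \<chi>: "lin_fun sL \<chi>"
  have "(\<Sum>(r1,r2)\<leftarrow>R. \<Sum>(a1,a2)\<leftarrow>\<Delta> r2. \<chi> (act r1 l) * \<phi> a1 * \<psi> a2) =
        (\<Sum>(r1,r2)\<leftarrow>R. \<Sum>(s1,s2)\<leftarrow>R. \<chi> (act r1 (act s1 l)) * \<phi> s2 * \<psi> r2)"
    using R_Delta_right[OF lin_fun_act[OF \<chi>] \<phi> \<psi>] by (simp add: act_mult)
  also have "\<dots> = (\<Sum>(s1,s2)\<leftarrow>R. \<Sum>(r1,r2)\<leftarrow>R. \<phi> s2 * \<psi> r2 * \<chi> (act r1 (act s1 l)))"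
    unfolding split_def by (subst sum_list_swap) (simp add: mult_ac)
  finally show "(\<Sum>(a,b,c)\<leftarrow>[(a1, a2, n). (a,n) \<leftarrow> R_coaction R act l, (a1,a2) \<leftarrow> \<Delta> a]. \<phi> a * \<psi> b * \<chi> c) =
      (\<Sum>(a,b,c)\<leftarrow>[(a, b, p). (a,n) \<leftarrow> R_coaction R act l, (b,p) \<leftarrow> R_coaction R act n]. \<phi> a * \<psi> b * \<chi> c)"
    by (simp add: R_coaction_def sum_list_concat_map o_def split_def mult_ac)
qed

lemma R_coaction_mult:
  "teq2 sH sL (R_coaction R act (l * m))
     [(a * b, n * p). (a,n) \<leftarrow> R_coaction R act l, (b,p) \<leftarrow> R_coaction R act m]"
  unfolding teq2_def
proof (intro allI impI)
  fix \<phi> \<psi> assume \<phi>: "lin_fun sH \<phi>" and \<psi>: "lin_fun sL \<psi>"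
  define F where "F x y = \<psi> (act x l * act y m)" for x y
  have F: "bilinear_form sH sH F"
    using \<psi> vector_space_H unfolding bilinear_form_def F_def
    by (simp add: lin_fun_iff act_add_left act_scale_left distrib_left distrib_right
        scale_mult_L(1)[symmetric] scale_mult_L(2)[symmetric] lin_fun_add lin_fun_scale)
  have "(\<Sum>(r1,r2)\<leftarrow>R. \<phi> r2 * \<psi> (act r1 (l * m))) = (\<Sum>(r1,r2)\<leftarrow>R. \<Sum>(a1,a2)\<leftarrow>\<Delta> r1. F a1 a2 * \<phi> r2)"
    by (simp add: F_def act_prod lin_fun_sum_list[OF \<psi>] sum_list_const_mult split_def mult_ac)
  also have "\<dots> = (\<Sum>(r1,r2)\<leftarrow>R. \<Sum>(s1,s2)\<leftarrow>R. F r1 s1 * \<phi> (r2 * s2))"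
    by (rule R_Delta_left[OF F \<phi>])
  finally show "(\<Sum>(a,b)\<leftarrow>R_coaction R act (l * m). \<phi> a * \<psi> b) =
      (\<Sum>(a,b)\<leftarrow>[(a * b, n * p). (a,n) \<leftarrow> R_coaction R act l, (b,p) \<leftarrow> R_coaction R act m]. \<phi> a * \<psi> b)"
    by (simp add: F_def R_coaction_def sum_list_concat_map o_def split_def mult_ac)
qed

lemma R_coaction_unit: "teq2 sH sL (R_coaction R act 1) [(1, 1)]"
  unfolding teq2_def
proof (intro allI impI)
  fix \<phi> \<psi> assume \<phi>: "lin_fun sH \<phi>" and \<psi>: "lin_fun sL \<psi>"
  have "(\<Sum>(r1,r2)\<leftarrow>R. \<phi> r2 * \<psi> (act r1 1)) = \<phi> (\<Sum>(r1,r2)\<leftarrow>R. sH (\<epsilon> r1) r2) * \<psi> 1"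
    by (simp add: act_unit lin_fun_scale[OF \<psi>] lin_fun_sum_list[OF \<phi>] lin_fun_scale[OF \<phi>]
        sum_list_mult_const sum_list_const_mult split_def mult_ac)
  then show "(\<Sum>(a,b)\<leftarrow>R_coaction R act 1. \<phi> a * \<psi> b) = (\<Sum>(a,b)\<leftarrow>[(1, 1)]. \<phi> a * \<psi> b)"
    by (simp add: R_counit_left[unfolded split_def] R_coaction_def o_def split_def)
qed

lemma R_coaction_compatible:
  "teq2 sH sL [(c * b, n). (a,b) \<leftarrow> \<Delta> x, (c,n) \<leftarrow> R_coaction R act (act a l)]
              [(a * c, act b n). (a,b) \<leftarrow> \<Delta> x, (c,n) \<leftarrow> R_coaction R act l]"
  unfolding teq2_def
proof (intro allI impI)
  fix \<phi> \<psi> assume \<phi>: "lin_fun sH \<phi>" and \<psi>: "lin_fun sL \<psi>"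
  have "(\<Sum>(a,b)\<leftarrow>\<Delta> x. \<Sum>(r1,r2)\<leftarrow>R. \<psi> (act (r1 * a) l) * \<phi> (r2 * b)) =
        (\<Sum>(a,b)\<leftarrow>\<Delta> x. \<Sum>(r1,r2)\<leftarrow>R. \<psi> (act (b * r1) l) * \<phi> (a * r2))"
    using R_Delta_commute[OF lin_fun_act[OF \<psi>] \<phi>, where x = x] unfolding split_def
    by (simp add: sum_list_swap[of _ R "\<Delta> x"])
  then show "(\<Sum>(a,b)\<leftarrow>[(c * b, n). (a,b) \<leftarrow> \<Delta> x, (c,n) \<leftarrow> R_coaction R act (act a l)]. \<phi> a * \<psi> b) =
      (\<Sum>(a,b)\<leftarrow>[(a * c, act b n). (a,b) \<leftarrow> \<Delta> x, (c,n) \<leftarrow> R_coaction R act l]. \<phi> a * \<psi> b)"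
    by (simp add: R_coaction_def sum_list_concat_map o_def split_def act_mult mult_ac)
qed

lemma R_coaction_counit:
  assumes "quasi_commutative R act"
  shows "(\<Sum>(a,n)\<leftarrow>R_coaction R act l. sL (\<epsilon> a) n) = l"
proof -
  have "l = (\<Sum>(r1,r2)\<leftarrow>R. act r2 1 * act r1 l)"
    using assms unfolding quasi_commutative_def by (metis mult_1_right)
  then show ?thesis
    by (simp add: R_coaction_def act_unit scale_mult_L(1)[symmetric] o_def split_def)
qed

lemma R_coaction_comodule_algebra:
  assumes "quasi_commutative R act" and "\<forall>(r1, r2) \<in> set R. r2 \<in> K"
  shows "comodule_algebra sH sL \<Delta> \<epsilon> K (R_coaction R act)"
proof -
  have "set (map fst (R_coaction R act l)) \<subseteq> K" for l
    using assms(2) by (auto simp: R_coaction_def)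
  then show ?thesis
    unfolding comodule_algebra_def
    using kalgebra_L R_coaction_add R_coaction_scale R_coaction_coassoc R_coaction_counit[OF assms(1)]
      R_coaction_mult R_coaction_unit by blast
qed

end

theorem corollary3p7:
  fixes sH :: "'k::field_char_0 \<Rightarrow> 'h::ring_1 \<Rightarrow> 'h"
    and sL :: "'k \<Rightarrow> 'l::ring_1 \<Rightarrow> 'l"
    and \<Delta> :: "'h \<Rightarrow> ('h \<times> 'h) list" and \<epsilon> :: "'h \<Rightarrow> 'k" and S :: "'h \<Rightarrow> 'h"
    and R :: "('h \<times> 'h) list" and act :: "'h \<Rightarrow> 'l \<Rightarrow> 'l" and K :: "'h set"
  assumes "quasitriangular sH \<Delta> \<epsilon> S R"
    and "module_algebra sH sL \<Delta> \<epsilon> UNIV act"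
    and "quasi_commutative R act"
    and "hopf_subalgebra sH \<Delta> S K"
    and "\<forall>(r1, r2) \<in> set R. r2 \<in> K"
  shows "base_algebra sH sL \<Delta> \<epsilon> K act (\<lambda>l. [(r2, act r1 l). (r1, r2) \<leftarrow> R])"
proof -
  interpret quasitriangular_module_algebra sH sL \<Delta> \<epsilon> S R act
    using assms(1,2) by unfold_locales
  have "base_algebra sH sL \<Delta> \<epsilon> K act (R_coaction R act)"
    unfolding base_algebra_def
    using module_algebra_restrict[OF assms(2)] R_coaction_comodule_algebra[OF assms(3,5)]
      R_coaction_compatible quasi_commutative_R_coaction[OF assms(3)] by blast
  then show ?thesis
    by (simp only: R_coaction_def[abs_def])
qed

end
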